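(* Let $V:\mathbb{R}^d\to\mathbb{R}$ be smooth and growing to infinity fast enough that the diffusion $dX_t=-\nabla V(X_t)\,dt+\sigma\,dW_t$ (with constant $\sigma>0$ and $d$-dimensional Wiener process $W_t$) is ergodic and reversible with invariant density $\mu(x)\propto\exp(-\beta V(x))$, $\beta=2/\sigma^2$. Let $\mathcal{L}f=\frac{\sigma^2}{2}\Delta f-\nabla V\cdot\nabla f$ be its generator, self-adjoint on $L^2_\mu$, with eigenvalues $0=\lambda_0>\lambda_1\ge\dots\ge\lambda_m$ (the $m+1$ dominant ones) and corresponding $L^2_\mu$-orthonormal eigenfunctions $\varphi_0\equiv 1,\varphi_1,\dots,\varphi_m$. Suppose $\chi=(\chi_0,\dots,\chi_m)^\top$ consists of smooth functions with $\chi_i\ge 0$, $\sum_{i=0}^m\chi_i=1$, and $\mathrm{span}\{\chi_0,\dots,\chi_m\}=\mathrm{span}\{\varphi_0,\dots,\varphi_m\}$. Let $C\in\mathbb{R}^{(m+1)\times(m+1)}$ be the invertible matrix with $\chi(x)=C\varphi(x)$ for all $x$, where $\varphi=(\varphi_0,\dots,\varphi_m)^\top$, let $L=\mathrm{diag}(\lambda_0,\dots,\lambda_m)$, and set $\mathcal{Q}=CLC^{-1}$, so that $\mathcal{L}\chi=\mathcal{Q}\chi$ componentwise. Consider the effective dynamics induced by the collective variable $\chi$ on the latent space $\chi(\mathbb{R}^d)\subset\mathbb{R}^{m+1}$, i.e. $dz_t=\widetilde b(z_t)\,dt+\sigma A(z_t)\,dW_t$ with $\widetilde b_l(z)=\Pi_\chi(\mathcal{L}\chi_l)(z)$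 and $(AA^\top)_{lk}(z)=\Pi_\chi\big(\sum_{i,j=1}^d\partial_{x_i}\chi_l\,\partial_{x_j}\chi_k\big)(z)$, and with generator $\tilde{\mathcal{L}}f(z)=\widetilde b(z)\cdot\nabla_z f(z)+\frac12\mathrm{Tr}\big(\tilde\sigma\tilde\sigma^\top(z)\nabla_z^2f(z)\big)$, where $\tilde\sigma=\sigma A$. Then $\widetilde b(z)=\mathcal{Q}z$, i.e. the effective dynamics is $dz_t=\mathcal{Q}z_t\,dt+\tilde\sigma(z_t)\,dW_t$ with generator $\tilde{\mathcal{L}}f(z)=(\mathcal{Q}z)^\top\nabla_zf(z)+\frac12\mathrm{Tr}\big(\tilde\sigma\tilde\sigma^\top(z)\nabla_z^2f(z)\big)$. Moreover, for each $i=0,\dots,m$, letting $v_i^\top=e_i^\top C^{-1}$ (the left eigenvector of $\mathcal{Q}$ for $\lambda_i$, with $e_i$ the $i$-th unit vector), the linear function $\tilde\varphi_i(z)=v_i^\top z$ satisfies $\tilde{\mathcal{L}}\tilde\varphi_i=\lambda_i\tilde\varphi_i$; in particular $\tilde{\mathcal{L}}$ has the eigenvalues $\lambda_0,\dots,\lambda_m$.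
   Context: For a collective variable $\xi:\mathbb{R}^d\to\mathbb{R}^k$, the coordinate projection is $\Pi_\xi f(x)=\mathbb{E}_\mu\big(f(x')\mid\xi(x')=\xi(x)\big)$, the average of $f$ with respect to $\mu$ conditioned on the level set $\{x':\xi(x')=\xi(x)\}$; since it is constant on level sets it is regarded as a function of $z=\xi(x)$ on the latent space. $L^2_\mu$ is the space of square-integrable functions with inner product $\langle f,g\rangle_\mu=\int fg\,\mu\,dx$. *)

theory Defs
  imports "HOL-Analysis.Analysis" "HOL-Probability.Probability"
begin

definition pderiv_at :: "'n::finite \<Rightarrow> (real^'n \<Rightarrow> real) \<Rightarrow> real^'n \<Rightarrow> real" where
  "pderiv_at i f x = frechet_derivative f (at x) (axis i 1)"

fun dpart :: "'n::finite list \<Rightarrow> (real^'n \<Rightarrow> real) \<Rightarrow> real^'n \<Rightarrow> real" where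
  "dpart [] f = f"
| "dpart (i # is) f = pderiv_at i (dpart is f)"

definition smooth_fun :: "(real^'n::finite \<Rightarrow> real) \<Rightarrow> bool" where
  "smooth_fun f \<longleftrightarrow> (\<forall>is x. dpart is f differentiable (at x))"

definition grad :: "(real^'n::finite \<Rightarrow> real) \<Rightarrow> real^'n \<Rightarrow> real^'n" where
  "grad f x = (\<chi> i. pderiv_at i f x)"

definition laplacian :: "(real^'n::finite \<Rightarrow> real) \<Rightarrow> real^'n \<Rightarrow> real" where
  "laplacian f x = (\<Sum>i\<in>UNIV. pderiv_at i (pderiv_at i f) x)"

definition generator :: "real \<Rightarrow> (real^'n::finite \<Rightarrow> real) \<Rightarrow> (real^'n \<Rightarrow> real) \<Rightarrow> real^'n \<Rightarrow> real" where
  "generator \<sigma> V f x = \<sigma>\<^sup>2 / 2 * laplacian f x - grad V x \<bullet> grad f x"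

definition gibbs :: "real \<Rightarrow> (real^'n::finite \<Rightarrow> real) \<Rightarrow> (real^'n) measure" where
  "gibbs \<beta> V = density lborel
     (\<lambda>x. ennreal (exp (- \<beta> * V x) / (\<integral>y. exp (- \<beta> * V y) \<partial>lborel)))"

text \<open>Coordinate projection: g is (a version of) \<open>\<Pi>_\<xi> f\<close>, i.e. \<open>g(z) = E_M(f | \<xi> = z)\<close>:
  g is a Borel function on the latent space and \<open>g \<circ> \<xi>\<close> is the conditional expectation of f
  given the sigma-algebra generated by \<xi>.\<close>
definition coord_proj :: "'a measure \<Rightarrow> ('a \<Rightarrow> 'b::topological_space) \<Rightarrow> ('a \<Rightarrow> real) \<Rightarrow> ('b \<Rightarrow> real) \<Rightarrow> bool" where
  "coord_proj M \<xi> f g \<longleftrightarrow>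
     \<xi> \<in> M \<rightarrow>\<^sub>M borel \<and> g \<in> borel_measurable borel \<and> integrable M f \<and> integrable M (\<lambda>x. g (\<xi> x)) \<and>
     (\<forall>A\<in>sets borel. (LINT x : \<xi> -` A \<inter> space M | M. g (\<xi> x)) = (LINT x : \<xi> -` A \<inter> space M | M. f x))"

text \<open>Generator of the effective dynamics: \<open>b\<cdot>\<nabla>f + 1/2 Tr(\<sigma>\<^sup>2 a \<nabla>\<^sup>2 f)\<close>, with \<open>a = AA\<^sup>T\<close>.\<close>
definition eff_generator :: "real \<Rightarrow> (real^'k \<Rightarrow> real^'k) \<Rightarrow> (real^'k \<Rightarrow> real^'k^'k) \<Rightarrow>
    (real^'k::finite \<Rightarrow> real) \<Rightarrow> real^'k \<Rightarrow> real" where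
  "eff_generator \<sigma> b a f z = b z \<bullet> grad f z
     + 1/2 * (\<Sum>l\<in>UNIV. \<Sum>k\<in>UNIV. (\<sigma>\<^sup>2 * a z $ l $ k) * pderiv_at k (pderiv_at l f) z)"

end

theory Submission
  imports Defs
begin

text \<open>Each \<open>\<chi>\<^sub>l\<close> is a linear combination of eigenfunctions of the generator, so
  \<open>\<L>\<chi> = Q\<chi>\<close> is itself a function of the collective variable; conditioning on \<open>\<chi>\<close> leaves it
  unchanged, whence \<open>b(z) = Qz\<close> almost surely for the law of \<open>\<chi>\<close>. A linear test function
  \<open>v \<bullet> z\<close> has vanishing Hessian, so the diffusion coefficient drops out and the effective
  generator maps it to \<open>v \<bullet> Qz\<close>, which equals \<open>\<lambda>\<^sub>i (v \<bullet> z)\<close> for the left eigenvectors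
  \<open>v = e\<^sub>i\<^sup>T C\<^sup>-\<^sup>1\<close>.\<close>

lemma matrix_inv_left:
  assumes "invertible (C :: 'a::semiring_1^'n^'m)"
  shows "matrix_inv C ** C = mat 1"
  using someI_ex[OF assms[unfolded invertible_def]] by (simp add: matrix_inv_def)

definition diag_mat :: "('n::finite \<Rightarrow> 'a::zero) \<Rightarrow> 'a^'n^'n" where
  "diag_mat d = (\<chi> i j. if i = j then d i else 0)"

lemma row_eq_axis_vector_matrix_mult:
  fixes A :: "'a::semiring_1^'n::finite^'m::finite"
  shows "row i A = axis i 1 v* A"
  by (simp add: row_def vector_matrix_mult_def axis_def vec_eq_iff if_distrib if_distribR
      cong: if_cong)

lemma axis_vector_matrix_mult_diag_mat:
  "axis i (1::'a::semiring_1) v* diag_mat d = d i *s axis i 1"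
  unfolding row_eq_axis_vector_matrix_mult[symmetric]
  by (simp add: row_def diag_mat_def axis_def vec_eq_iff)

lemma row_matrix_inv_nonzero:
  fixes C :: "'a::semiring_1^'n::finite^'m::finite"
  assumes "invertible C"
  shows "row i (matrix_inv C) \<noteq> 0"
proof
  assume "row i (matrix_inv C) = 0"
  then have "axis i 1 v* (matrix_inv C ** C) = 0"
    by (simp add: row_eq_axis_vector_matrix_mult vector_matrix_mul_assoc[symmetric])
  then show False
    by (simp add: matrix_inv_left[OF assms] axis_eq_0_iff)
qed

lemma row_matrix_inv_left_eigenvector:
  fixes C :: "real^'n::finite^'n"
  assumes "invertible C"
  shows "row i (matrix_inv C) v* (C ** diag_mat d ** matrix_inv C)
    = d i *\<^sub>R row i (matrix_inv C)"
proof -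
  have "row i (matrix_inv C) v* (C ** diag_mat d ** matrix_inv C)
      = axis i 1 v* ((matrix_inv C ** C) ** diag_mat d ** matrix_inv C)"
    by (simp add: row_eq_axis_vector_matrix_mult vector_matrix_mul_assoc matrix_mul_assoc)
  also have "\<dots> = (axis i 1 v* diag_mat d) v* matrix_inv C"
    by (simp add: matrix_inv_left[OF assms] vector_matrix_mul_assoc)
  also have "\<dots> = d i *\<^sub>R row i (matrix_inv C)"
    by (metis axis_vector_matrix_mult_diag_mat scalar_vector_matrix_assoc
        row_eq_axis_vector_matrix_mult scalar_mult_eq_scaleR)
  finally show ?thesis .
qed

lemma pderiv_at_linear_combination:
  fixes f :: "'j \<Rightarrow> real^'n::finite \<Rightarrow> real"
  assumes "finite J" and "\<And>j. j \<in> J \<Longrightarrow> f j differentiable (at x)"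
  shows "pderiv_at i (\<lambda>y. \<Sum>j\<in>J. c j * f j y) x = (\<Sum>j\<in>J. c j * pderiv_at i (f j) x)"
proof -
  have "((\<lambda>y. \<Sum>j\<in>J. c j * f j y) has_derivative
      (\<lambda>h. \<Sum>j\<in>J. c j * frechet_derivative (f j) (at x) h)) (at x)"
    using assms by (intro has_derivative_sum has_derivative_mult_right
        frechet_derivative_works[THEN iffD1])
  then show ?thesis
    unfolding pderiv_at_def by (simp add: frechet_derivative_at[symmetric])
qed

lemma pderiv_at_inner_left: "pderiv_at l (\<lambda>z. w \<bullet> z) z = (w::real^'n::finite) $ l"
proof -
  have "((\<lambda>z. w \<bullet> z) has_derivative (\<lambda>h. w \<bullet> h)) (at z)"
    by (intro has_derivative_inner_right has_derivative_ident)
  then show ?thesis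
    unfolding pderiv_at_def by (simp add: frechet_derivative_at[symmetric] inner_axis)
qed

lemma pderiv_at_const: "pderiv_at l (\<lambda>z::real^'n::finite. c) z = 0"
  unfolding pderiv_at_def by (simp add: frechet_derivative_const)

lemma smooth_fun_differentiable: "smooth_fun f \<Longrightarrow> f differentiable (at x)"
  using dpart.simps(1) unfolding smooth_fun_def by metis

lemma smooth_fun_pderiv_at_differentiable:
  "smooth_fun f \<Longrightarrow> pderiv_at i f differentiable (at x)"
  using dpart.simps unfolding smooth_fun_def by metis

lemma grad_linear_combination:
  fixes f :: "'j \<Rightarrow> real^'n::finite \<Rightarrow> real"
  assumes "finite J" and "\<And>j. j \<in> J \<Longrightarrow> f j differentiable (at x)"
  shows "grad (\<lambda>y. \<Sum>j\<in>J. c j * f j y) x = (\<Sum>j\<in>J. c j *\<^sub>R grad (f j) x)"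
  using pderiv_at_linear_combination[OF assms] by (simp add: grad_def vec_eq_iff sum_component)

lemma laplacian_linear_combination:
  fixes f :: "'j \<Rightarrow> real^'n::finite \<Rightarrow> real"
  assumes J: "finite J" and smooth: "\<And>j. j \<in> J \<Longrightarrow> smooth_fun (f j)"
  shows "laplacian (\<lambda>y. \<Sum>j\<in>J. c j * f j y) x = (\<Sum>j\<in>J. c j * laplacian (f j) x)"
proof -
  have "pderiv_at i (pderiv_at i (\<lambda>y. \<Sum>j\<in>J. c j * f j y)) x
      = (\<Sum>j\<in>J. c j * pderiv_at i (pderiv_at i (f j)) x)" for i
  proof -
    have "pderiv_at i (\<lambda>y. \<Sum>j\<in>J. c j * f j y) = (\<lambda>y. \<Sum>j\<in>J. c j * pderiv_at i (f j) y)"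
      using pderiv_at_linear_combination[OF J] smooth smooth_fun_differentiable by blast
    moreover have "pderiv_at i (\<lambda>y. \<Sum>j\<in>J. c j * pderiv_at i (f j) y) x
        = (\<Sum>j\<in>J. c j * pderiv_at i (pderiv_at i (f j)) x)"
      using smooth smooth_fun_pderiv_at_differentiable
      by (intro pderiv_at_linear_combination[OF J]) blast
    ultimately show ?thesis
      by simp
  qed
  then show ?thesis
    unfolding laplacian_def by (simp add: sum_distrib_left sum.swap[of _ UNIV J])
qed

lemma generator_linear_combination:
  fixes f :: "'j \<Rightarrow> real^'n::finite \<Rightarrow> real"
  assumes "finite J" and "\<And>j. j \<in> J \<Longrightarrow> smooth_fun (f j)"
  shows "generator \<sigma> V (\<lambda>y. \<Sum>j\<in>J. c j * f j y) x = (\<Sum>j\<in>J. c j * generator \<sigma> V (f j) x)"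
proof -
  have "\<And>j. j \<in> J \<Longrightarrow> f j differentiable (at x)"
    using assms(2) smooth_fun_differentiable by blast
  then show ?thesis
    using assms
    by (simp add: generator_def laplacian_linear_combination grad_linear_combination
        inner_sum_right sum_distrib_left sum_subtractf algebra_simps)
qed

lemma generator_mixed_eigenfunctions:
  fixes \<phi> :: "'k::finite \<Rightarrow> real^'n::finite \<Rightarrow> real" and C :: "real^'k^'k"
  assumes "invertible C" and "\<And>j. smooth_fun (\<phi> j)"
    and "\<And>j x. generator \<sigma> V (\<phi> j) x = lam j * \<phi> j x"
  shows "generator \<sigma> V (\<lambda>x. (C *v (\<chi> j. \<phi> j x)) $ l) x
    = ((C ** diag_mat lam ** matrix_inv C) *v (C *v (\<chi> j. \<phi> j x))) $ l"
proof -
  have "generator \<sigma> V (\<lambda>x. (C *v (\<chi> j. \<phi> j x)) $ l) x = (\<Sum>j\<in>UNIV. C $ l $ j * (lam j * \<phi> j x))"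
    using assms(2,3) by (simp add: matrix_vector_mult_def generator_linear_combination)
  also have "\<dots> = ((C ** diag_mat lam) *v (\<chi> j. \<phi> j x)) $ l"
    by (simp add: matrix_vector_mult_def matrix_matrix_mult_def diag_mat_def if_distrib if_distribR
        mult.assoc cong: if_cong)
  also have "C ** diag_mat lam = (C ** diag_mat lam ** matrix_inv C) ** C"
    by (simp add: matrix_mul_assoc[symmetric] matrix_inv_left[OF assms(1)])
  finally show ?thesis
    by (simp add: matrix_vector_mul_assoc)
qed

lemma coord_proj_AE_eq_of_comp:
  fixes h :: "'b::topological_space \<Rightarrow> real"
  assumes proj: "coord_proj M \<xi> (\<lambda>x. h (\<xi> x)) g" and h[measurable]: "h \<in> borel_measurable borel"
  shows "AE z in distr M borel \<xi>. g z = h z"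
proof (rule density_unique_real)
  have [measurable]: "\<xi> \<in> M \<rightarrow>\<^sub>M borel" and g[measurable]: "g \<in> borel_measurable borel"
    using proj unfolding coord_proj_def by auto
  show "integrable (distr M borel \<xi>) g" "integrable (distr M borel \<xi>) h"
    using proj unfolding coord_proj_def by (auto simp: integrable_distr_eq)
  fix A assume "A \<in> sets (distr M borel \<xi>)"
  then have [measurable]: "A \<in> sets borel" by simp
  have set_integral_distr: "(\<integral>z \<in> A. f z \<partial>distr M borel \<xi>) = (LINT x : \<xi> -` A \<inter> space M | M. f (\<xi> x))"
    if [measurable]: "f \<in> borel_measurable borel" for f :: "'b \<Rightarrow> real"
    unfolding set_lebesgue_integral_def
    by (subst integral_distr) (auto intro!: Bochner_Integration.integral_cong simp: indicator_def)
  show "(\<integral>z \<in> A. g z \<partial>distr M borel \<xi>) = (\<integral>z \<in> A. h z \<partial>distr M borel \<xi>)"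
    using proj unfolding coord_proj_def by (simp add: set_integral_distr[OF g] set_integral_distr[OF h])
qed

lemma eff_generator_linear: "eff_generator \<sigma> b a (\<lambda>z. w \<bullet> z) z = b z \<bullet> w"
proof -
  have "pderiv_at l (\<lambda>z. w \<bullet> z) = (\<lambda>z. w $ l)" for l
    by (rule ext) (rule pderiv_at_inner_left)
  then show ?thesis
    by (simp add: eff_generator_def grad_def pderiv_at_inner_left pderiv_at_const inner_commute)
qed

lemma eff_generator_left_eigenvector:
  fixes Q :: "real^'k::finite^'k"
  assumes "b z = Q *v z" and "v v* Q = c *\<^sub>R v"
  shows "eff_generator \<sigma> b a (\<lambda>z. v \<bullet> z) z = c * (v \<bullet> z)"
proof -
  have "eff_generator \<sigma> b a (\<lambda>z. v \<bullet> z) z = v \<bullet> (Q *v z)"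
    by (metis eff_generator_linear assms(1) inner_commute)
  also have "\<dots> = (v v* Q) \<bullet> z"
    by (rule dot_lmul_matrix[symmetric])
  finally show ?thesis
    by (simp add: assms(2))
qed

theorem mainTheorem1:
  fixes V :: "real^'d \<Rightarrow> real"
    and \<sigma> :: real
    and lam :: "'k::finite \<Rightarrow> real"
    and \<phi> :: "'k \<Rightarrow> real^'d \<Rightarrow> real"
    and i0 :: 'k
    and chi :: "real^'d \<Rightarrow> real^'k"
    and C :: "real^'k^'k"
    and btil :: "real^'k \<Rightarrow> real^'k"
    and atil :: "real^'k \<Rightarrow> real^'k^'k"
  defines "\<beta> \<equiv> 2 / \<sigma>\<^sup>2"
  defines "\<mu> \<equiv> gibbs \<beta> V"
  defines "Q \<equiv> C ** (\<chi> i j. if i = j then lam i else 0) ** matrix_inv C"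
  assumes \<sigma>_pos: "\<sigma> > 0"
    and V_smooth: "smooth_fun V"
    and V_normalizable: "integrable lborel (\<lambda>x. exp (- \<beta> * V x))"
    \<comment> \<open>eigenpairs of the generator, L2(mu)-orthonormal\<close>
    and \<phi>_smooth: "\<And>i. smooth_fun (\<phi> i)"
    and \<phi>_eigen: "\<And>i x. generator \<sigma> V (\<phi> i) x = lam i * \<phi> i x"
    and \<phi>_L2: "\<And>i j. integrable \<mu> (\<lambda>x. \<phi> i x * \<phi> j x)"
    and \<phi>_orthonormal: "\<And>i j. (\<integral>x. \<phi> i x * \<phi> j x \<partial>\<mu>) = (if i = j then 1 else 0)"
    and \<phi>0: "\<And>x. \<phi> i0 x = 1"
    and lam0: "lam i0 = 0"
    and lam_neg: "\<And>i. i \<noteq> i0 \<Longrightarrow> lam i < 0"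
    \<comment> \<open>these are the dominant eigenvalues: every other L2 eigenvalue lies below them\<close>
    and lam_dominant: "\<And>f \<nu>. smooth_fun f \<Longrightarrow> (\<forall>x. generator \<sigma> V f x = \<nu> * f x) \<Longrightarrow>
        integrable \<mu> (\<lambda>x. (f x)\<^sup>2) \<Longrightarrow> \<not> (AE x in \<mu>. f x = 0) \<Longrightarrow> \<nu> \<notin> range lam \<Longrightarrow>
        (\<forall>i. \<nu> < lam i)"
    \<comment> \<open>the collective variable chi: smooth partition of unity spanning the same space as phi\<close>
    and chi_smooth: "\<And>l. smooth_fun (\<lambda>x. chi x $ l)"
    and chi_nonneg: "\<And>l x. chi x $ l \<ge> 0"
    and chi_sum: "\<And>x. (\<Sum>l\<in>UNIV. chi x $ l) = 1"
    and C_inv: "invertible C"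
    and chi_C: "\<And>x. chi x = C *v (\<chi> i. \<phi> i x)"
    \<comment> \<open>coefficients of the effective dynamics (versions of the coordinate projections)\<close>
    and btil_proj: "\<And>l. coord_proj \<mu> chi (generator \<sigma> V (\<lambda>x. chi x $ l)) (\<lambda>z. btil z $ l)"
    and atil_proj: "\<And>l k. coord_proj \<mu> chi
        (\<lambda>x. \<Sum>i\<in>UNIV. \<Sum>j\<in>UNIV. pderiv_at i (\<lambda>y. chi y $ l) x * pderiv_at j (\<lambda>y. chi y $ k) x)
        (\<lambda>z. atil z $ l $ k)"
  shows "(AE z in distr \<mu> borel chi. btil z = Q *v z)
    \<and> (\<forall>i. row i (matrix_inv C) \<noteq> 0
          \<and> row i (matrix_inv C) v* Q = lam i *\<^sub>R row i (matrix_inv C)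
          \<and> (AE z in distr \<mu> borel chi.
               eff_generator \<sigma> btil atil (\<lambda>z. row i (matrix_inv C) \<bullet> z) z
                 = lam i * (row i (matrix_inv C) \<bullet> z)))"
proof -
  have Q: "Q = C ** diag_mat lam ** matrix_inv C"
    unfolding Q_def diag_mat_def ..
  have L_chi: "generator \<sigma> V (\<lambda>x. chi x $ l) = (\<lambda>x. (Q *v chi x) $ l)" for l
    using generator_mixed_eigenfunctions[where \<phi> = \<phi> and lam = lam, OF C_inv \<phi>_smooth \<phi>_eigen]
    by (simp add: Q chi_C fun_eq_iff)
  have b_linear: "AE z in distr \<mu> borel chi. btil z = Q *v z"
  proof -
    have "AE z in distr \<mu> borel chi. btil z $ l = (Q *v z) $ l" for l
      using btil_proj[of l, unfolded L_chi]
      by (rule coord_proj_AE_eq_of_comp[where h = "\<lambda>z. (Q *v z) $ l"])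
        (intro borel_measurable_continuous_onI continuous_intros)
    then show ?thesis
      by (simp add: vec_eq_iff AE_all_countable)
  qed
  have "AE z in distr \<mu> borel chi. eff_generator \<sigma> btil atil (\<lambda>z. row i (matrix_inv C) \<bullet> z) z
      = lam i * (row i (matrix_inv C) \<bullet> z)" for i
    using b_linear
    by eventually_elim
      (simp add: eff_generator_left_eigenvector Q row_matrix_inv_left_eigenvector[OF C_inv])
  then show ?thesis
    using b_linear row_matrix_inv_nonzero[OF C_inv] row_matrix_inv_left_eigenvector[OF C_inv]
    unfolding Q by blast
qed

end
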